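(* Let $\mathbf A\in\mathbb C^{n\times n}$ with $\operatorname{Ind}\mathbf A=k$ and $\operatorname{rank}\mathbf A^{k+1}=\operatorname{rank}\mathbf A^{k}=r$, and let $\mathbf y\in\mathbb C^{n}$. Then the unique minimal $\mathbf P$-norm least squares solution $\hat{\mathbf x}=(\hat x_1,\dots,\hat x_n)^{T}$ of $\mathbf A\mathbf x=\mathbf y$ is given by \[ \hat x_i=\frac{\sum_{\beta\in J_{r,n}\{i\}}\left|\left(\mathbf A^{k+1}_{.i}(\mathbf f)\right)^{\beta}_{\beta}\right|}{\sum_{\beta\in J_{r,n}}\left|(\mathbf A^{k+1})^{\beta}_{\beta}\right|},\qquad i=1,\dots,n, \] where $\mathbf f=\mathbf A^{k}\mathbf y$.
   Context: $\operatorname{Ind}\mathbf A$ is the smallest nonnegative $k$ with $\operatorname{rank}\mathbf A^{k+1}=\operatorname{rank}\mathbf A^{k}$. Write $\mathbf A=\mathbf P\begin{pmatrix}\mathbf C&\mathbf 0\\ \mathbf 0&\mathbf N\end{pmatrix}\mathbf P^{-1}$ with $\mathbf C$ nonsingular and $\mathbf N$ nilpotent (Jordan canonical form); the $\mathbf P$-norm is $\|\mathbf x\|_{\mathbf P}=\|\mathbf P^{-1}\mathbf x\|$. It is known that the unique minimal $\mathbf P$-norm least squares solution of $\mathbf A\mathbf x=\mathbf y$ is $\mathbf A^{D}\mathbf y$, where $\mathbf A^{D}$ is the Drazin inverse (the unique $\mathbf X$ with $\mathbf A^{k+1}\mathbf X=\mathbf A^{k}$, $\mathbf X\mathbf A\mathbf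 X=\mathbf X$, $\mathbf A\mathbf X=\mathbf X\mathbf A$). $\mathbf M_{.i}(\mathbf c)$ denotes $\mathbf M$ with its $i$-th column replaced by $\mathbf c$. $J_{r,n}$ is the set of strictly increasing sequences of $r$ elements of $\{1,\dots,n\}$, $J_{r,n}\{i\}=\{\beta\in J_{r,n}:i\in\beta\}$, $\mathbf M^{\beta}_{\beta}$ is the principal submatrix indexed by $\beta$, $|\cdot|$ is the determinant. *)

theory Defs
  imports "Jordan_Normal_Form.DL_Rank_Submatrix"
begin

definition mrank :: "complex mat \<Rightarrow> nat" where
  "mrank A = vec_space.rank (dim_row A) A"

definition mat_ind :: "complex mat \<Rightarrow> nat" where
  "mat_ind A = (LEAST k. mrank (A ^\<^sub>m (k+1)) = mrank (A ^\<^sub>m k))"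

definition is_drazin_inverse :: "nat \<Rightarrow> complex mat \<Rightarrow> complex mat \<Rightarrow> bool" where
  "is_drazin_inverse n A X \<longleftrightarrow> X \<in> carrier_mat n n \<and>
     A ^\<^sub>m (mat_ind A + 1) * X = A ^\<^sub>m (mat_ind A) \<and> X * A * X = X \<and> A * X = X * A"

definition replace_col :: "'a mat \<Rightarrow> nat \<Rightarrow> 'a vec \<Rightarrow> 'a mat" where
  "replace_col M i c = mat (dim_row M) (dim_col M) (\<lambda>(a,b). if b = i then c $ a else M $$ (a,b))"

text \<open>J_{r,n}: r-element subsets of {0..<n} (strictly increasing index sequences).\<close>
definition Jrn :: "nat \<Rightarrow> nat \<Rightarrow> nat set set" where
  "Jrn r n = {\<beta>. \<beta> \<subseteq> {0..<n} \<and> card \<beta> = r}"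

end

theory Submission
  imports Defs
begin

text \<open>
  Let \<open>B = A\<^sup>k\<^sup>+\<^sup>1\<close> and factor \<open>B = U V\<close> with \<open>U\<close> an \<open>n \<times> r\<close> matrix of full column rank whose
  columns lie in the range of \<open>B\<close>. The Drazin equations give \<open>X = B X\<^sup>k\<^sup>+\<^sup>2\<close> and
  \<open>B = X\<^sup>k\<^sup>+\<^sup>1 B\<^sup>2\<close>: the solution \<open>X y\<close> lies in the range of \<open>U\<close>, and \<open>ker B\<^sup>2 = ker B\<close>,
  which makes the \<open>r \<times> r\<close> core \<open>C = V U\<close> invertible.

  The sum of the principal \<open>r\<close>-minors of \<open>U M\<close> equals \<open>det (M U)\<close>, by comparing coefficients in
  Sylvester's identity \<open>x\<^sup>r det (x I\<^sub>n + U M) = x\<^sup>n det (x I\<^sub>r + M U)\<close>; so the denominator is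
  \<open>det C\<close>. Replacing column \<open>i\<close> of \<open>B\<close> by \<open>B x\<close> multiplies \<open>B\<close> on the right by the rank-one
  perturbation \<open>I + (x - e\<^sub>i) e\<^sub>i\<^sup>T\<close> of the identity. The principal minors through \<open>i\<close> are the
  difference between the minor sums for the columns \<open>B x\<close> and \<open>0\<close>, and the matrix determinant
  lemma turns this difference into \<open>det C \<cdot> x\<^sub>i\<close>.
\<close>

section \<open>Principal minors\<close>

lemma bij_betw_pick:
  assumes "finite S"
  shows "bij_betw (pick S) {0..<card S} S"
proof -
  have inj: "inj_on (pick S) {0..<card S}"
    unfolding inj_on_def by (metis atLeastLessThan_iff linorder_neqE_nat pick_mono less_irrefl)
  have sub: "pick S ` {0..<card S} \<subseteq> S"
    using pick_in_set by auto
  have "card (pick S ` {0..<card S}) = card S"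
    using card_image[OF inj] by simp
  then have "pick S ` {0..<card S} = S"
    using card_subset_eq[OF assms sub] by simp
  then show ?thesis
    using inj by (simp add: bij_betw_def)
qed

lemma submatrix_principal_carrier:
  assumes "M \<in> carrier_mat n n" and "S \<subseteq> {0..<n}"
  shows "submatrix M S S \<in> carrier_mat (card S) (card S)"
proof -
  have "{i. i < dim_row M \<and> i \<in> S} = S" "{i. i < dim_col M \<and> i \<in> S} = S"
    using assms by auto
  then show ?thesis
    by (intro carrier_matI) (simp_all only: dim_submatrix)
qed

lemma det_principal_submatrix:
  fixes M :: "'a :: comm_ring_1 mat"
  assumes M: "M \<in> carrier_mat n n" and S: "S \<subseteq> {0..<n}"
  shows "det (submatrix M S S) = (\<Sum>p | p permutes S. signof p * (\<Prod>i\<in>S. M $$ (i, p i)))"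
proof -
  let ?m = "card S"
  have bij: "bij_betw (pick S) {0..<?m} S"
    using S finite_subset by (blast intro: bij_betw_pick)
  then have inj: "inj_on (pick S) {0..<?m}"
    by (rule bij_betw_imp_inj_on)
  have rows: "{i. i < dim_row M \<and> i \<in> S} = S" "{i. i < dim_col M \<and> i \<in> S} = S"
    using M S by auto
  have entry: "submatrix M S S $$ (a, b) = M $$ (pick S a, pick S b)" if "a < ?m" "b < ?m" for a b
    by (rule submatrix_index) (simp_all only: rows that)
  define lift where
    "lift \<pi> x = (if x \<in> S then pick S (\<pi> (inv_into {0..<?m} (pick S) x)) else x)" for \<pi> x
  have lift_bij: "bij_betw lift {q. q permutes {0..<?m}} {p. p permutes S}"
    unfolding lift_def by (rule bij_betw_permutations[OF bij])
  have lift_map: "lift q = map_permutation {0..<?m} (pick S) q" for q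
    unfolding lift_def map_permutation_def restrict_id_def
    using bij_betw_imp_surj_on[OF bij] by auto
  have lift_pick: "lift q (pick S a) = pick S (q a)" if "a < ?m" for q a
    unfolding lift_map using map_permutation_apply[OF inj] that by simp
  have "det (submatrix M S S)
      = (\<Sum>q | q permutes {0..<?m}. signof q * (\<Prod>a\<in>{0..<?m}. M $$ (pick S a, pick S (q a))))"
    unfolding det_def'[OF submatrix_principal_carrier[OF M S]]
  proof (rule sum.cong[OF refl])
    fix q assume "q \<in> {q. q permutes {0..<?m}}"
    then have "q a < ?m" if "a < ?m" for a
      using that permutes_in_image by fastforce
    then show "signof q * (\<Prod>a = 0..<?m. submatrix M S S $$ (a, q a))
        = signof q * (\<Prod>a\<in>{0..<?m}. M $$ (pick S a, pick S (q a)))"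
      by (simp add: entry)
  qed
  also have "\<dots> = (\<Sum>q | q permutes {0..<?m}. signof (lift q) * (\<Prod>i\<in>S. M $$ (i, lift q i)))"
  proof (rule sum.cong[OF refl])
    fix q assume "q \<in> {q. q permutes {0..<?m}}"
    then have q: "q permutes {0..<?m}" by simp
    have "(\<Prod>i\<in>S. M $$ (i, lift q i)) = (\<Prod>a\<in>{0..<?m}. M $$ (pick S a, lift q (pick S a)))"
      using prod.reindex_bij_betw[OF bij, symmetric] by blast
    also have "\<dots> = (\<Prod>a\<in>{0..<?m}. M $$ (pick S a, pick S (q a)))"
      using lift_pick by simp
    finally show "signof q * (\<Prod>a\<in>{0..<?m}. M $$ (pick S a, pick S (q a)))
        = signof (lift q) * (\<Prod>i\<in>S. M $$ (i, lift q i))"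
      unfolding lift_map sign_map_permutation[OF inj q finite_atLeastLessThan] by simp
  qed
  also have "\<dots> = (\<Sum>p | p permutes S. signof p * (\<Prod>i\<in>S. M $$ (i, p i)))"
    by (rule sum.reindex_bij_betw[OF lift_bij])
  finally show ?thesis .
qed

lemma permutes_fixing_complement:
  assumes "X \<subseteq> A"
  shows "{p. p permutes A \<and> (\<forall>i\<in>A - X. p i = i)} = {p. p permutes X}"
proof (intro equalityI subsetI)
  fix p assume "p \<in> {p. p permutes A \<and> (\<forall>i\<in>A - X. p i = i)}"
  then have p: "p permutes A" "\<forall>i\<in>A - X. p i = i" by auto
  have "\<forall>x. x \<notin> X \<longrightarrow> p x = x"
    using p permutes_not_in by (metis Diff_iff)
  moreover have "\<forall>y. \<exists>!x. p x = y"
    using p(1) unfolding permutes_def by blast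
  ultimately show "p \<in> {p. p permutes X}"
    unfolding permutes_def by blast
next
  fix p assume "p \<in> {p. p permutes X}"
  then show "p \<in> {p. p permutes A \<and> (\<forall>i\<in>A - X. p i = i)}"
    using permutes_subset[OF _ assms] permutes_not_in by auto
qed

lemma prod_if_fixed:
  fixes x :: "'a :: comm_ring_1"
  assumes "finite B"
  shows "(\<Prod>i\<in>B. if p i = i then x else 0) = (if \<forall>i\<in>B. p i = i then x ^ card B else 0)"
  using assms by (induction B rule: finite_induct) auto

lemma det_smult_one_add_principal_minors:
  fixes M :: "'a :: comm_ring_1 mat"
  assumes M: "M \<in> carrier_mat n n"
  shows "det (x \<cdot>\<^sub>m 1\<^sub>m n + M) = (\<Sum>S\<in>Pow {0..<n}. x ^ (n - card S) * det (submatrix M S S))"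
proof -
  let ?A = "{0..<n}" and ?P = "{p. p permutes {0..<n}}"
  let ?term = "\<lambda>X p. signof p * ((\<Prod>i\<in>X. M $$ (i, p i)) *
       (if \<forall>i\<in>?A - X. p i = i then x ^ card (?A - X) else 0))"
  have entry: "(x \<cdot>\<^sub>m 1\<^sub>m n + M) $$ (i, p i) = M $$ (i, p i) + (if p i = i then x else 0)"
    if "p permutes ?A" "i \<in> ?A" for p i
    using M that permutes_in_image[OF that(1)] by (auto simp: add.commute)
  have "det (x \<cdot>\<^sub>m 1\<^sub>m n + M)
      = (\<Sum>p\<in>?P. signof p * (\<Prod>i\<in>?A. M $$ (i, p i) + (if p i = i then x else 0)))"
    unfolding det_def'[OF add_carrier_mat[OF M]]
    by (intro sum.cong refl) (simp add: entry)
  also have "\<dots> = (\<Sum>p\<in>?P. \<Sum>X\<in>Pow ?A. ?term X p)"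
    by (simp add: prod_add prod_if_fixed sum_distrib_left)
  also have "\<dots> = (\<Sum>X\<in>Pow ?A. \<Sum>p\<in>?P. ?term X p)"
    by (rule sum.swap)
  also have "\<dots> = (\<Sum>X\<in>Pow ?A. x ^ (n - card X) * det (submatrix M X X))"
  proof (rule sum.cong[OF refl])
    fix X assume "X \<in> Pow ?A"
    then have X: "X \<subseteq> ?A" by simp
    have fin: "finite ?P"
      by (rule finite_permutations) simp
    have card: "card (?A - X) = n - card X"
      using X by (simp add: card_Diff_subset finite_subset)
    have "(\<Sum>p\<in>?P. ?term X p)
      = (\<Sum>p\<in>?P. if \<forall>i\<in>?A - X. p i = i
                  then x ^ (n - card X) * (signof p * (\<Prod>i\<in>X. M $$ (i, p i))) else 0)"
      by (intro sum.cong) (auto simp: card)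
    also have "\<dots> = (\<Sum>p\<in>{p\<in>?P. \<forall>i\<in>?A - X. p i = i}. x ^ (n - card X) * (signof p * (\<Prod>i\<in>X. M $$ (i, p i))))"
      by (rule sum.inter_filter[OF fin, symmetric])
    also have "{p\<in>?P. \<forall>i\<in>?A - X. p i = i} = {p. p permutes X}"
      using permutes_fixing_complement[OF X] by simp
    also have "(\<Sum>p | p permutes X. x ^ (n - card X) * (signof p * (\<Prod>i\<in>X. M $$ (i, p i))))
       = x ^ (n - card X) * det (submatrix M X X)"
      unfolding det_principal_submatrix[OF M X] by (simp add: sum_distrib_left)
    finally show "(\<Sum>p\<in>?P. ?term X p) = x ^ (n - card X) * det (submatrix M X X)" .
  qed
  finally show ?thesis .
qed

definition principal_minor_sum :: "nat \<Rightarrow> nat \<Rightarrow> 'a :: comm_ring_1 mat \<Rightarrow> 'a" where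
  "principal_minor_sum r n M = (\<Sum>\<beta>\<in>Jrn r n. det (submatrix M \<beta> \<beta>))"

lemma finite_Jrn: "finite (Jrn r n)"
  unfolding Jrn_def by (rule finite_subset[of _ "Pow {0..<n}"]) auto

lemma det_smult_one_add_principal_minor_sums:
  fixes M :: "'a :: comm_ring_1 mat"
  assumes M: "M \<in> carrier_mat n n"
  shows "det (x \<cdot>\<^sub>m 1\<^sub>m n + M) = (\<Sum>r\<le>n. principal_minor_sum r n M * x ^ (n - r))"
proof -
  have "Pow {0..<n} = (\<Union>r\<in>{..n}. Jrn r n)"
    by (auto simp: Jrn_def card_mono[of "{0..<n}", simplified])
  then have "det (x \<cdot>\<^sub>m 1\<^sub>m n + M)
      = (\<Sum>S\<in>(\<Union>r\<in>{..n}. Jrn r n). x ^ (n - card S) * det (submatrix M S S))"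
    unfolding det_smult_one_add_principal_minors[OF M] by simp
  also have "\<dots> = (\<Sum>r\<le>n. \<Sum>S\<in>Jrn r n. x ^ (n - card S) * det (submatrix M S S))"
    by (rule sum.UNION_disjoint) (auto simp: finite_Jrn Jrn_def)
  also have "\<dots> = (\<Sum>r\<le>n. principal_minor_sum r n M * x ^ (n - r))"
    unfolding principal_minor_sum_def sum_distrib_right
    by (intro sum.cong refl) (auto simp: Jrn_def mult.commute)
  finally show ?thesis .
qed

lemma det_four_block_mat_schur_left:
  fixes U V :: "'a :: idom mat"
  assumes U: "U \<in> carrier_mat n r" and V: "V \<in> carrier_mat r n"
  shows "det (four_block_mat (x \<cdot>\<^sub>m 1\<^sub>m n) (- U) V (1\<^sub>m r)) = det (x \<cdot>\<^sub>m 1\<^sub>m n + U * V)"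
proof -
  let ?K = "four_block_mat (x \<cdot>\<^sub>m 1\<^sub>m n) (- U) V (1\<^sub>m r)"
  let ?L = "four_block_mat (1\<^sub>m n) (0\<^sub>m n r) (- V) (1\<^sub>m r)"
  have "?K * ?L = four_block_mat (x \<cdot>\<^sub>m 1\<^sub>m n * 1\<^sub>m n + - U * - V) (x \<cdot>\<^sub>m 1\<^sub>m n * 0\<^sub>m n r + - U * 1\<^sub>m r)
       (V * 1\<^sub>m n + 1\<^sub>m r * - V) (V * 0\<^sub>m n r + 1\<^sub>m r * 1\<^sub>m r)"
    by (rule mult_four_block_mat) (use U V in auto)
  also have "\<dots> = four_block_mat (x \<cdot>\<^sub>m 1\<^sub>m n + U * V) (- U) (0\<^sub>m r n) (1\<^sub>m r)"
    by (rule cong_four_block_mat) (use U V in \<open>auto intro!: eq_matI\<close>)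
  finally have KL: "?K * ?L = four_block_mat (x \<cdot>\<^sub>m 1\<^sub>m n + U * V) (- U) (0\<^sub>m r n) (1\<^sub>m r)" .
  have "det ?L = 1"
    by (subst det_four_block_mat_upper_right_zero[of _ n _ r]) (use V in auto)
  then have "det ?K = det (?K * ?L)"
    using det_mult[of ?K "n + r" ?L] U V by simp
  also have "\<dots> = det (x \<cdot>\<^sub>m 1\<^sub>m n + U * V) * det (1\<^sub>m r :: 'a mat)"
    unfolding KL by (rule det_four_block_mat_lower_left_zero) (use U V in auto)
  finally show ?thesis by simp
qed

lemma det_four_block_mat_schur_right:
  fixes U V :: "'a :: idom mat"
  assumes U: "U \<in> carrier_mat n r" and V: "V \<in> carrier_mat r n"
  shows "x ^ r * det (four_block_mat (x \<cdot>\<^sub>m 1\<^sub>m n) (- U) V (1\<^sub>m r))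
    = x ^ n * det (x \<cdot>\<^sub>m 1\<^sub>m r + V * U)"
proof -
  let ?K = "four_block_mat (x \<cdot>\<^sub>m 1\<^sub>m n) (- U) V (1\<^sub>m r)"
  let ?L = "four_block_mat (1\<^sub>m n) (0\<^sub>m n r) (- V) (x \<cdot>\<^sub>m 1\<^sub>m r)"
  have "?L * ?K = four_block_mat (1\<^sub>m n * (x \<cdot>\<^sub>m 1\<^sub>m n) + 0\<^sub>m n r * V) (1\<^sub>m n * - U + 0\<^sub>m n r * 1\<^sub>m r)
       (- V * (x \<cdot>\<^sub>m 1\<^sub>m n) + x \<cdot>\<^sub>m 1\<^sub>m r * V) (- V * - U + x \<cdot>\<^sub>m 1\<^sub>m r * 1\<^sub>m r)"
    by (rule mult_four_block_mat) (use U V in auto)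
  also have "\<dots> = four_block_mat (x \<cdot>\<^sub>m 1\<^sub>m n) (- U) (0\<^sub>m r n) (x \<cdot>\<^sub>m 1\<^sub>m r + V * U)"
    by (rule cong_four_block_mat) (use U V in \<open>auto intro!: eq_matI simp: add.commute\<close>)
  finally have LK: "?L * ?K = four_block_mat (x \<cdot>\<^sub>m 1\<^sub>m n) (- U) (0\<^sub>m r n) (x \<cdot>\<^sub>m 1\<^sub>m r + V * U)" .
  have "det ?L = x ^ r"
    by (subst det_four_block_mat_upper_right_zero[of _ n _ r]) (use V in auto)
  then have "x ^ r * det ?K = det (?L * ?K)"
    using det_mult[of ?L "n + r" ?K] U V by simp
  also have "\<dots> = det (x \<cdot>\<^sub>m 1\<^sub>m n) * det (x \<cdot>\<^sub>m 1\<^sub>m r + V * U)"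
    unfolding LK by (rule det_four_block_mat_lower_left_zero) (use U V in auto)
  finally show ?thesis by simp
qed

lemma sylvester_det_identity:
  fixes U V :: "'a :: idom mat"
  assumes "U \<in> carrier_mat n r" and "V \<in> carrier_mat r n"
  shows "x ^ r * det (x \<cdot>\<^sub>m 1\<^sub>m n + U * V) = x ^ n * det (x \<cdot>\<^sub>m 1\<^sub>m r + V * U)"
  using det_four_block_mat_schur_left[OF assms] det_four_block_mat_schur_right[OF assms] by simp

lemma submatrix_full:
  assumes "M \<in> carrier_mat n n"
  shows "submatrix M {0..<n} {0..<n} = M"
proof -
  have rows: "{i. i < n \<and> i \<in> {0..<n}} = {0..<n}"
    by auto
  have "pick {0..<n} i = i" if "i < n" for i
    using pick_reduce_set[of i n UNIV] that by (simp add: pick_UNIV atLeast0LessThan lessThan_def)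
  then show ?thesis
    using assms by (intro eq_matI) (auto simp: submatrix_def rows)
qed

lemma Jrn_self: "Jrn n n = {{0..<n}}"
  unfolding Jrn_def using card_subset_eq[of "{0..<n}"] by auto

lemma principal_minor_sum_self:
  assumes "M \<in> carrier_mat n n"
  shows "principal_minor_sum n n M = det M"
  unfolding principal_minor_sum_def Jrn_self using submatrix_full[OF assms] by simp

lemma principal_minor_sum_mult_comm:
  fixes U V :: "'a :: {idom, ring_char_0} mat"
  assumes U: "U \<in> carrier_mat n r" and V: "V \<in> carrier_mat r n" and "r \<le> n"
  shows "principal_minor_sum r n (U * V) = det (V * U)"
proof -
  have UV: "U * V \<in> carrier_mat n n" and VU: "V * U \<in> carrier_mat r r"
    using U V by auto
  define P where "P = (\<Sum>k\<le>n. monom (principal_minor_sum k n (U * V)) (n - k + r))"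
  define Q where "Q = (\<Sum>k\<le>r. monom (principal_minor_sum k r (V * U)) (n + (r - k)))"
  have "poly P x = poly Q x" for x
  proof -
    have "poly P x = x ^ r * det (x \<cdot>\<^sub>m 1\<^sub>m n + U * V)"
      unfolding P_def det_smult_one_add_principal_minor_sums[OF UV] poly_sum poly_monom sum_distrib_left
      by (intro sum.cong refl) (simp only: power_add mult_ac)
    also have "\<dots> = x ^ n * det (x \<cdot>\<^sub>m 1\<^sub>m r + V * U)"
      by (rule sylvester_det_identity[OF U V])
    also have "\<dots> = poly Q x"
      unfolding Q_def det_smult_one_add_principal_minor_sums[OF VU] poly_sum poly_monom sum_distrib_left
      by (intro sum.cong refl) (simp only: power_add mult_ac)
    finally show ?thesis .
  qed
  then have "P = Q"
    using poly_eq_poly_eq_iff by blast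
  moreover have "coeff P n = principal_minor_sum r n (U * V)"
  proof -
    have "coeff P n = (\<Sum>k\<le>n. if k = r then principal_minor_sum k n (U * V) else 0)"
      unfolding P_def coeff_sum coeff_monom by (intro sum.cong refl) auto
    then show ?thesis
      using \<open>r \<le> n\<close> by (simp add: sum.delta)
  qed
  moreover have "coeff Q n = principal_minor_sum r r (V * U)"
  proof -
    have "coeff Q n = (\<Sum>k\<le>r. if k = r then principal_minor_sum k r (V * U) else 0)"
      unfolding Q_def coeff_sum coeff_monom by (intro sum.cong refl) auto
    then show ?thesis
      by (simp add: sum.delta)
  qed
  ultimately show ?thesis
    using principal_minor_sum_self[OF VU] by simp
qed

section \<open>Rank-one updates\<close>

definition outer_prod :: "'a :: comm_ring_1 vec \<Rightarrow> 'a vec \<Rightarrow> 'a mat" where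
  "outer_prod a b = mat (dim_vec a) (dim_vec b) (\<lambda>(p, q). a $ p * b $ q)"

lemma outer_prod_carrier [simp]:
  "a \<in> carrier_vec m \<Longrightarrow> b \<in> carrier_vec l \<Longrightarrow> outer_prod a b \<in> carrier_mat m l"
  unfolding outer_prod_def by auto

lemma outer_prod_eq_mult:
  assumes "a \<in> carrier_vec m" and "b \<in> carrier_vec l"
  shows "outer_prod a b = mat_of_cols m [a] * mat_of_rows l [b]"
  by (rule eq_matI)
     (use assms in \<open>auto simp: outer_prod_def mat_of_cols_def mat_of_rows_def scalar_prod_def\<close>)

lemma mult_outer_prod:
  fixes A :: "'a :: comm_ring_1 mat"
  assumes A: "A \<in> carrier_mat m n" and b: "b \<in> carrier_vec n" and h: "h \<in> carrier_vec l"
  shows "A * outer_prod b h = outer_prod (A *\<^sub>v b) h"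
  by (rule eq_matI)
     (use A b h in \<open>auto simp: outer_prod_def scalar_prod_def sum_distrib_right mult.assoc\<close>)

lemma outer_prod_mult:
  fixes D :: "'a :: comm_ring_1 mat"
  assumes D: "D \<in> carrier_mat n l" and b: "b \<in> carrier_vec m" and d: "d \<in> carrier_vec n"
  shows "outer_prod b d * D = outer_prod b (transpose_mat D *\<^sub>v d)"
  by (rule eq_matI)
     (use D b d in \<open>auto simp: outer_prod_def scalar_prod_def sum_distrib_left mult_ac\<close>)

lemma one_smult_mat [simp]: "(1 :: 'a :: monoid_mult) \<cdot>\<^sub>m A = A"
  by (rule eq_matI) auto

lemma det_one_add_outer_prod:
  fixes b h :: "'a :: idom vec"
  assumes b: "b \<in> carrier_vec r" and h: "h \<in> carrier_vec r"
  shows "det (1\<^sub>m r + outer_prod b h) = 1 + h \<bullet> b"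
proof -
  let ?U = "mat_of_cols r [b]" and ?V = "mat_of_rows r [h]"
  have U: "?U \<in> carrier_mat r 1" and V: "?V \<in> carrier_mat 1 r"
    by auto
  have "det (1\<^sub>m r + outer_prod b h) = det (1 \<cdot>\<^sub>m 1\<^sub>m r + ?U * ?V)"
    using outer_prod_eq_mult[OF b h] by simp
  also have "\<dots> = det (1 \<cdot>\<^sub>m 1\<^sub>m 1 + ?V * ?U)"
    using sylvester_det_identity[OF U V, of 1] by simp
  also have "\<dots> = (1 \<cdot>\<^sub>m 1\<^sub>m 1 + ?V * ?U) $$ (0, 0)"
    by (rule det_single) (use U V in auto)
  also have "\<dots> = 1 + h \<bullet> b"
    using b h by (simp add: mat_of_cols_def mat_of_rows_def scalar_prod_def)
  finally show ?thesis .
qed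

lemma det_add_outer_prod:
  fixes C :: "'a :: idom mat"
  assumes C: "C \<in> carrier_mat r r" and b: "b \<in> carrier_vec r" and h: "h \<in> carrier_vec r"
  shows "det (C + outer_prod (C *\<^sub>v b) h) = det C * (1 + h \<bullet> b)"
proof -
  have "C * (1\<^sub>m r + outer_prod b h) = C * 1\<^sub>m r + C * outer_prod b h"
    using C b h by (intro mult_add_distrib_mat) auto
  also have "\<dots> = C + outer_prod (C *\<^sub>v b) h"
    using C b h by (simp add: mult_outer_prod)
  finally have "C + outer_prod (C *\<^sub>v b) h = C * (1\<^sub>m r + outer_prod b h)" ..
  then show ?thesis
    using C b h by (simp add: det_mult det_one_add_outer_prod)
qed

lemma det_add_outer_prod_shift:
  fixes C :: "'a :: field mat"
  assumes C: "C \<in> carrier_mat r r" and detC: "det C \<noteq> 0"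
    and a: "a \<in> carrier_vec r" and s: "s \<in> carrier_vec r" and h: "h \<in> carrier_vec r"
  shows "det (C + outer_prod (a + C *\<^sub>v s) h) - det (C + outer_prod a h) = det C * (h \<bullet> s)"
proof -
  obtain D where D: "D \<in> carrier_mat r r" "C * D = 1\<^sub>m r"
    using det_non_zero_imp_unit[OF C detC] unfolding Units_def ring_mat_def by auto
  define b where "b = D *\<^sub>v a"
  have b: "b \<in> carrier_vec r" and Cb: "C *\<^sub>v b = a"
    unfolding b_def using C D a by (auto simp: assoc_mult_mat_vec[symmetric])
  have "a + C *\<^sub>v s = C *\<^sub>v (b + s)"
    using C b s Cb by (simp add: mult_add_distrib_mat_vec)
  then have "det (C + outer_prod (a + C *\<^sub>v s) h) - det (C + outer_prod a h)
      = det C * (1 + h \<bullet> (b + s)) - det C * (1 + h \<bullet> b)"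
    using det_add_outer_prod[OF C _ h] b s Cb by (metis add_carrier_vec)
  also have "\<dots> = det C * (h \<bullet> s)"
    using b s h by (simp add: scalar_prod_add_distrib algebra_simps)
  finally show ?thesis .
qed

section \<open>Cramer's rule on the range of an index-one matrix\<close>

lemma replace_col_carrier [simp]:
  "M \<in> carrier_mat n m \<Longrightarrow> replace_col M i c \<in> carrier_mat n m"
  unfolding replace_col_def by auto

lemma replace_col_mult_vec:
  fixes B :: "'a :: comm_ring_1 mat"
  assumes B: "B \<in> carrier_mat n n" and w: "w \<in> carrier_vec n" and i: "i < n"
  shows "replace_col B i (B *\<^sub>v w) = B * replace_col (1\<^sub>m n) i w"
proof (rule eq_matI)
  fix a b assume "a < dim_row (B * replace_col (1\<^sub>m n) i w)" "b < dim_col (B * replace_col (1\<^sub>m n) i w)"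
  then have a: "a < n" and b: "b < n"
    using B by (auto simp: replace_col_def)
  have "col (replace_col (1\<^sub>m n) i w) b = (if b = i then w else unit_vec n b)"
    using b w by (intro eq_vecI) (auto simp: replace_col_def)
  then show "replace_col B i (B *\<^sub>v w) $$ (a, b) = (B * replace_col (1\<^sub>m n) i w) $$ (a, b)"
    using B a b w by (auto simp: replace_col_def)
qed (use B in \<open>auto simp: replace_col_def\<close>)

lemma replace_col_one_mat:
  fixes c :: "'a :: comm_ring_1 vec"
  assumes "c \<in> carrier_vec n" and "i < n"
  shows "replace_col (1\<^sub>m n) i c = 1\<^sub>m n + outer_prod (c - unit_vec n i) (unit_vec n i)"
  by (rule eq_matI) (use assms in \<open>auto simp: replace_col_def outer_prod_def\<close>)

lemma submatrix_replace_col_notin: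
  assumes B: "B \<in> carrier_mat n n" and \<beta>: "\<beta> \<subseteq> {0..<n}" and i: "i \<notin> \<beta>"
  shows "submatrix (replace_col B i c) \<beta> \<beta> = submatrix (replace_col B i d) \<beta> \<beta>"
proof -
  have rows: "{a. a < n \<and> a \<in> \<beta>} = \<beta>"
    using \<beta> by auto
  have "pick \<beta> b < n \<and> pick \<beta> b \<noteq> i" if "b < card \<beta>" for b
    using pick_in_set[of b \<beta>] that \<beta> i by auto
  then show ?thesis
    unfolding submatrix_def by (intro eq_matI) (use B rows in \<open>auto simp: replace_col_def\<close>)
qed

lemma det_submatrix_replace_col_zero:
  fixes B :: "'a :: idom mat"
  assumes B: "B \<in> carrier_mat n n" and \<beta>: "\<beta> \<subseteq> {0..<n}" and i: "i \<in> \<beta>"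
  shows "det (submatrix (replace_col B i (0\<^sub>v n)) \<beta> \<beta>) = 0"
proof -
  let ?M = "replace_col B i (0\<^sub>v n)" and ?m = "card \<beta>"
  have M: "?M \<in> carrier_mat n n"
    using B by simp
  have rows: "{a. a < dim_row ?M \<and> a \<in> \<beta>} = \<beta>" "{a. a < dim_col ?M \<and> a \<in> \<beta>} = \<beta>"
    using \<beta> M by auto
  define t where "t = card {a\<in>\<beta>. a < i}"
  have pick_t: "pick \<beta> t = i"
    unfolding t_def by (rule pick_card_in_set[OF i])
  have "t < ?m"
    unfolding t_def using i \<beta> finite_subset by (intro psubset_card_mono) auto
  have "submatrix ?M \<beta> \<beta> *\<^sub>v unit_vec ?m t = 0\<^sub>v ?m"
  proof (rule eq_vecI)
    fix a assume "a < dim_vec (0\<^sub>v ?m :: 'a vec)"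
    then have a: "a < ?m" by simp
    have "(submatrix ?M \<beta> \<beta> *\<^sub>v unit_vec ?m t) $ a = submatrix ?M \<beta> \<beta> $$ (a, t)"
      using submatrix_principal_carrier[OF M \<beta>] a \<open>t < ?m\<close> by simp
    also have "\<dots> = ?M $$ (pick \<beta> a, pick \<beta> t)"
      by (rule submatrix_index) (simp_all only: rows a \<open>t < ?m\<close>)
    also have "\<dots> = 0"
    proof -
      have "pick \<beta> a < n" "i < n"
        using pick_in_set[of a \<beta>] a i \<beta> by auto
      then show ?thesis
        unfolding pick_t using B by (simp add: replace_col_def)
    qed
    finally show "(submatrix ?M \<beta> \<beta> *\<^sub>v unit_vec ?m t) $ a = 0\<^sub>v ?m $ a"
      using a by simp
  qed (use submatrix_principal_carrier[OF M \<beta>] in simp)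
  then show ?thesis
    using det_0_iff_vec_prod_zero[OF submatrix_principal_carrier[OF M \<beta>]] \<open>t < ?m\<close>
    by (metis unit_vec_carrier unit_vec_nonzero)
qed

lemma sum_principal_minors_containing:
  fixes B :: "'a :: idom mat"
  assumes B: "B \<in> carrier_mat n n"
  shows "(\<Sum>\<beta>\<in>{\<beta>\<in>Jrn r n. i \<in> \<beta>}. det (submatrix (replace_col B i c) \<beta> \<beta>))
    = principal_minor_sum r n (replace_col B i c) - principal_minor_sum r n (replace_col B i (0\<^sub>v n))"
proof -
  let ?In = "{\<beta>\<in>Jrn r n. i \<in> \<beta>}" and ?Out = "{\<beta>\<in>Jrn r n. i \<notin> \<beta>}"
  have split: "principal_minor_sum r n M
      = (\<Sum>\<beta>\<in>?In. det (submatrix M \<beta> \<beta>)) + (\<Sum>\<beta>\<in>?Out. det (submatrix M \<beta> \<beta>))" for M :: "'a mat"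
    unfolding principal_minor_sum_def using finite_Jrn
    by (subst sum.union_disjoint[symmetric]) (auto intro: sum.cong)
  have "(\<Sum>\<beta>\<in>?In. det (submatrix (replace_col B i (0\<^sub>v n)) \<beta> \<beta>)) = 0"
    using det_submatrix_replace_col_zero[OF B] by (auto simp: Jrn_def)
  moreover have "(\<Sum>\<beta>\<in>?Out. det (submatrix (replace_col B i (0\<^sub>v n)) \<beta> \<beta>))
      = (\<Sum>\<beta>\<in>?Out. det (submatrix (replace_col B i c) \<beta> \<beta>))"
  proof (rule sum.cong[OF refl])
    fix \<beta> assume "\<beta> \<in> ?Out"
    then show "det (submatrix (replace_col B i (0\<^sub>v n)) \<beta> \<beta>) = det (submatrix (replace_col B i c) \<beta> \<beta>)"
      using submatrix_replace_col_notin[OF B, of \<beta> i "0\<^sub>v n" c] by (simp add: Jrn_def)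
  qed
  ultimately show ?thesis
    unfolding split[of "replace_col B i c"] split[of "replace_col B i (0\<^sub>v n)"] by simp
qed

lemma principal_minor_sum_replace_col_factor:
  fixes U V :: "'a :: {idom, ring_char_0} mat"
  assumes U: "U \<in> carrier_mat n r" and V: "V \<in> carrier_mat r n" and "r \<le> n"
    and x: "x \<in> carrier_vec n" and i: "i < n"
  shows "principal_minor_sum r n (replace_col (U * V) i (U * V *\<^sub>v x))
    = det (V * U + outer_prod (V *\<^sub>v (x - unit_vec n i)) (row U i))"
proof -
  let ?e = "unit_vec n i"
  let ?R = "1\<^sub>m n + outer_prod (x - ?e) ?e"
  have R: "?R \<in> carrier_mat n n"
    using x by simp
  have "replace_col (U * V) i (U * V *\<^sub>v x) = U * V * ?R"
    using replace_col_mult_vec[of "U * V" n x i] replace_col_one_mat[OF x i] U V x i by simp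
  also have "\<dots> = U * (V * ?R)"
    using U V R by simp
  finally have "principal_minor_sum r n (replace_col (U * V) i (U * V *\<^sub>v x)) = det (V * ?R * U)"
    using principal_minor_sum_mult_comm[OF U _ \<open>r \<le> n\<close>, of "V * ?R"] V R by simp
  also have "V * ?R * U = V * U + outer_prod (V *\<^sub>v (x - ?e)) (transpose_mat U *\<^sub>v ?e)"
  proof -
    have xe: "x - ?e \<in> carrier_vec n" and Vxe: "V *\<^sub>v (x - ?e) \<in> carrier_vec r"
      using V x by auto
    have "V * ?R = V * 1\<^sub>m n + V * outer_prod (x - ?e) ?e"
      by (rule mult_add_distrib_mat[OF V]) (use xe in auto)
    also have "\<dots> = V + outer_prod (V *\<^sub>v (x - ?e)) ?e"
      using V mult_outer_prod[OF V xe unit_vec_carrier] by simp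
    finally have "V * ?R * U = (V + outer_prod (V *\<^sub>v (x - ?e)) ?e) * U"
      by simp
    also have "\<dots> = V * U + outer_prod (V *\<^sub>v (x - ?e)) ?e * U"
      by (rule add_mult_distrib_mat[OF V _ U]) (use Vxe in simp)
    finally show ?thesis
      using outer_prod_mult[OF U Vxe] by simp
  qed
  also have "transpose_mat U *\<^sub>v ?e = row U i"
    by (rule eq_vecI) (use U i in auto)
  finally show ?thesis .
qed

lemma mult_mat_vec_zero [simp]: "A \<in> carrier_mat m n \<Longrightarrow> A *\<^sub>v 0\<^sub>v n = 0\<^sub>v m"
  by (rule eq_vecI) auto

lemma sum_principal_minors_replace_col_range:
  fixes U V :: "'a :: field_char_0 mat"
  assumes U: "U \<in> carrier_mat n r" and V: "V \<in> carrier_mat r n" and "r \<le> n"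
    and detC: "det (V * U) \<noteq> 0" and s: "s \<in> carrier_vec r" and i: "i < n"
  shows "(\<Sum>\<beta>\<in>{\<beta>\<in>Jrn r n. i \<in> \<beta>}. det (submatrix (replace_col (U * V) i (U * V *\<^sub>v (U *\<^sub>v s))) \<beta> \<beta>))
    = det (V * U) * (U *\<^sub>v s) $ i"
proof -
  let ?e = "unit_vec n i" and ?C = "V * U" and ?M = "\<lambda>c. replace_col (U * V) i c"
  have C: "?C \<in> carrier_mat r r" and h: "row U i \<in> carrier_vec r" and e: "V *\<^sub>v (0\<^sub>v n - ?e) \<in> carrier_vec r"
    using U V by auto
  have x: "U *\<^sub>v s \<in> carrier_vec n"
    using U s by simp
  have "V *\<^sub>v (U *\<^sub>v s - ?e) = V *\<^sub>v ((0\<^sub>v n - ?e) + U *\<^sub>v s)"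
    using U x by (intro arg_cong[where f = "\<lambda>v. V *\<^sub>v v"] eq_vecI) auto
  also have "\<dots> = V *\<^sub>v (0\<^sub>v n - ?e) + ?C *\<^sub>v s"
    using U V s x by (simp add: mult_add_distrib_mat_vec assoc_mult_mat_vec)
  finally have shift: "V *\<^sub>v (U *\<^sub>v s - ?e) = V *\<^sub>v (0\<^sub>v n - ?e) + ?C *\<^sub>v s" .
  have "U * V *\<^sub>v 0\<^sub>v n = 0\<^sub>v n"
    using U V by simp
  then have "(\<Sum>\<beta>\<in>{\<beta>\<in>Jrn r n. i \<in> \<beta>}. det (submatrix (?M (U * V *\<^sub>v (U *\<^sub>v s))) \<beta> \<beta>))
      = principal_minor_sum r n (?M (U * V *\<^sub>v (U *\<^sub>v s))) - principal_minor_sum r n (?M (U * V *\<^sub>v 0\<^sub>v n))"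
    using sum_principal_minors_containing[of "U * V" n, where r = r and i = i] U V by simp
  also have "\<dots> = det (?C + outer_prod (V *\<^sub>v (U *\<^sub>v s - ?e)) (row U i))
      - det (?C + outer_prod (V *\<^sub>v (0\<^sub>v n - ?e)) (row U i))"
    using principal_minor_sum_replace_col_factor[OF U V \<open>r \<le> n\<close> _ i] x by simp
  also have "\<dots> = det ?C * (row U i \<bullet> s)"
    unfolding shift by (rule det_add_outer_prod_shift[OF C detC e s h])
  also have "row U i \<bullet> s = (U *\<^sub>v s) $ i"
    using U i by simp
  finally show ?thesis .
qed

section \<open>Drazin inverses and full-rank factorizations\<close>

lemma pow_mat_commute:
  fixes P Q :: "'a :: semiring_1 mat"
  assumes P: "P \<in> carrier_mat n n" and Q: "Q \<in> carrier_mat n n" and PQ: "P * Q = Q * P"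
  shows "P ^\<^sub>m m * Q = Q * P ^\<^sub>m m"
proof (induction m)
  case (Suc m)
  note assoc = assoc_mult_mat[of _ n n _ n _ n] mult_carrier_mat[of _ n n _ n]
  have "P ^\<^sub>m Suc m * Q = P ^\<^sub>m m * (P * Q)"
    using P Q by (simp add: assoc)
  also have "\<dots> = (P ^\<^sub>m m * Q) * P"
    using P Q by (simp add: PQ assoc)
  also have "\<dots> = Q * P ^\<^sub>m Suc m"
    using P Q by (simp add: Suc assoc)
  finally show ?case .
qed (use P Q in simp)

lemma pow_mat_mult_commute:
  fixes P Q :: "'a :: semiring_1 mat"
  assumes P: "P \<in> carrier_mat n n" and Q: "Q \<in> carrier_mat n n" and PQ: "P * Q = Q * P"
  shows "(P * Q) ^\<^sub>m m = P ^\<^sub>m m * Q ^\<^sub>m m"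
proof (induction m)
  case (Suc m)
  note assoc = assoc_mult_mat[of _ n n _ n _ n] mult_carrier_mat[of _ n n _ n]
  have "(P * Q) ^\<^sub>m Suc m = P ^\<^sub>m m * (Q ^\<^sub>m m * P) * Q"
    using P Q by (simp add: Suc assoc)
  also have "Q ^\<^sub>m m * P = P * Q ^\<^sub>m m"
    using pow_mat_commute[OF Q P PQ[symmetric]] by simp
  finally show ?case
    using P Q by (simp add: assoc)
qed (use P Q in simp)

lemma pow_mat_idem:
  assumes "E * E = E"
  shows "E ^\<^sub>m Suc m = E"
  by (induction m) (simp_all add: assms)

context
  fixes A X :: "'a :: comm_ring_1 mat" and n k :: nat
  assumes A: "A \<in> carrier_mat n n" and X: "X \<in> carrier_mat n n"
    and drazin: "A ^\<^sub>m (k + 1) * X = A ^\<^sub>m k" "X * A * X = X" "A * X = X * A"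
begin

private lemmas assoc_square = assoc_mult_mat[of _ n n _ n _ n] mult_carrier_mat[of _ n n _ n]

lemma drazin_projection_power: "(X * A) ^\<^sub>m (k + 1) = X * A"
proof -
  have "X * A * (X * A) = X * A * X * A"
    using A X by (simp add: assoc_square)
  then show ?thesis
    using pow_mat_idem drazin(2) by simp
qed

lemma drazin_eq_power_mult: "X = A ^\<^sub>m (k + 1) * X ^\<^sub>m (k + 2)"
proof -
  have "X = (X * A) ^\<^sub>m (k + 1) * X"
    using drazin_projection_power drazin(2) by simp
  also have "(X * A) ^\<^sub>m (k + 1) = A ^\<^sub>m (k + 1) * X ^\<^sub>m (k + 1)"
    unfolding drazin(3)[symmetric] by (rule pow_mat_mult_commute[OF A X drazin(3)])
  also have "A ^\<^sub>m (k + 1) * X ^\<^sub>m (k + 1) * X = A ^\<^sub>m (k + 1) * X ^\<^sub>m (k + 2)"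
    using A X by (simp add: assoc_square)
  finally show ?thesis .
qed

lemma drazin_power_eq_mult_square: "A ^\<^sub>m (k + 1) = X ^\<^sub>m (k + 1) * (A ^\<^sub>m (k + 1) * A ^\<^sub>m (k + 1))"
proof -
  have XA: "X * A \<in> carrier_mat n n"
    using A X by simp
  have "X * A * A = A * X * A"
    by (simp add: drazin(3))
  also have "\<dots> = A * (X * A)"
    using A X by (simp add: assoc_square)
  finally have "X * A * A = A * (X * A)" .
  from pow_mat_commute[OF A XA this[symmetric], of "k + 1"]
  have "X * A * A ^\<^sub>m (k + 1) = A ^\<^sub>m (k + 1) * (X * A)"
    by (rule sym)
  also have "\<dots> = A ^\<^sub>m (k + 1) * X * A"
    using A X by (simp add: assoc_square)
  also have "\<dots> = A ^\<^sub>m (k + 1)"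
    unfolding drazin(1) by simp
  finally have "A ^\<^sub>m (k + 1) = (X * A) ^\<^sub>m (k + 1) * A ^\<^sub>m (k + 1)"
    using drazin_projection_power by simp
  also have "(X * A) ^\<^sub>m (k + 1) = X ^\<^sub>m (k + 1) * A ^\<^sub>m (k + 1)"
    by (rule pow_mat_mult_commute[OF X A drazin(3)[symmetric]])
  finally show ?thesis
    using A X by (simp add: assoc_square)
qed

end

lemma (in vec_space) maximal_lin_indpt_spans:
  assumes max: "maximal S (\<lambda>T. T \<subseteq> W \<and> lin_indpt T)" and W: "W \<subseteq> carrier_vec n" and c: "c \<in> W"
  shows "c \<in> span S"
proof -
  have SW: "S \<subseteq> W" and li: "lin_indpt S"
    using max unfolding maximal_def by auto
  have S: "S \<subseteq> carrier_vec n" and c': "c \<in> carrier_vec n"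
    using SW W c by auto
  show ?thesis
  proof (cases "c \<in> S")
    case True
    then show ?thesis
      using in_own_span[of S] S by auto
  next
    case False
    have "\<not> lin_indpt (S \<union> {c})"
    proof
      assume "lin_indpt (S \<union> {c})"
      moreover have "S \<union> {c} \<subseteq> W"
        using SW c by auto
      ultimately have "S \<union> {c} = S"
        using max unfolding maximal_def by blast
      then show False
        using False by auto
    qed
    then show ?thesis
      using lin_dep_iff_in_span[OF S li c' False] by simp
  qed
qed

lemma (in vec_space) span_mat_of_cols:
  assumes xs: "set xs \<subseteq> carrier_vec n" "distinct xs" and c: "c \<in> span (set xs)"
  shows "\<exists>w \<in> carrier_vec (length xs). c = mat_of_cols n xs *\<^sub>v w"
proof -
  let ?U = "mat_of_cols n xs"
  have U: "?U \<in> carrier_mat n (length xs)" and cols: "cols ?U = xs"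
    using xs(1) by auto
  obtain a where a: "lincomb a (set xs) = c"
    using finite_in_span[OF _ xs(1) c] by auto
  have "?U *\<^sub>v vec (length xs) (\<lambda>i. a (col ?U i)) = lincomb a (set (cols ?U))"
    using mat_mult_eq_lincomb[OF U] cols xs(2) by simp
  then show ?thesis
    using a cols by (intro bexI[of _ "vec (length xs) (\<lambda>i. a (col ?U i))"]) auto
qed

lemma mat_factor_through_cols:
  assumes B: "B \<in> carrier_mat n m" and U: "U \<in> carrier_mat n r"
    and cols: "\<And>j. j < m \<Longrightarrow> \<exists>w \<in> carrier_vec r. col B j = U *\<^sub>v w"
  obtains V where "V \<in> carrier_mat r m" and "B = U * V"
proof -
  define v where "v j = (SOME w. w \<in> carrier_vec r \<and> col B j = U *\<^sub>v w)" for j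
  have v: "v j \<in> carrier_vec r" "col B j = U *\<^sub>v v j" if "j < m" for j
  proof -
    have "\<exists>w. w \<in> carrier_vec r \<and> col B j = U *\<^sub>v w"
      using cols[OF that] by blast
    from someI_ex[OF this] show "v j \<in> carrier_vec r" "col B j = U *\<^sub>v v j"
      unfolding v_def by auto
  qed
  define V where "V = mat_of_cols r (map v [0..<m])"
  have V: "V \<in> carrier_mat r m"
    unfolding V_def by (metis length_map length_upt minus_nat.diff_0 mat_of_cols_carrier(1))
  have "B = U * V"
  proof (rule mat_col_eqI)
    fix j assume "j < dim_col (U * V)"
    then have j: "j < m"
      using V by simp
    have "col V j = v j"
      unfolding V_def using j v(1)[OF j] by simp
    then show "col B j = col (U * V) j"
      using col_mult2[OF U V j] v(2)[OF j] by simp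
  qed (use B U V in auto)
  with V show thesis
    by (rule that)
qed

lemma mult_unit_vec_eq_col:
  fixes A :: "'a :: semiring_1 mat"
  assumes "A \<in> carrier_mat n m" and "j < m"
  shows "A *\<^sub>v unit_vec m j = col A j"
  by (rule eq_vecI) (use assms in auto)

lemma full_rank_factorization:
  fixes B :: "'a :: field mat"
  assumes B: "B \<in> carrier_mat n m" and rank: "vec_space.rank n B = r"
  obtains U V W where "U \<in> carrier_mat n r" "V \<in> carrier_mat r m" "B = U * V"
    and "W \<in> carrier_mat m r" "U = B * W"
    and "\<And>z. z \<in> carrier_vec r \<Longrightarrow> U *\<^sub>v z = 0\<^sub>v n \<Longrightarrow> z = 0\<^sub>v r"
proof -
  interpret vec_space "TYPE('a)" n .
  have colsB: "set (cols B) \<subseteq> carrier_vec n"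
    using B cols_dim by blast
  obtain S where max: "maximal S (\<lambda>T. T \<subseteq> set (cols B) \<and> lin_indpt T)"
    using maximal_exists[of "\<lambda>T. T \<subseteq> set (cols B) \<and> lin_indpt T" "card (set (cols B))" "{}"]
    by (meson List.finite_set card_mono empty_iff empty_subsetI finite_lin_indpt2 rev_finite_subset)
  have SB: "S \<subseteq> set (cols B)" and li: "lin_indpt S"
    using max unfolding maximal_def by auto
  obtain xs where xs: "set xs = S" "distinct xs"
    using finite_distinct_list[OF finite_subset[OF SB]] by blast
  have "length xs = r"
    using distinct_card[OF xs(2)] xs(1) rank_card_indpt[OF B max] rank by simp
  define U where "U = mat_of_cols n xs"
  have U: "U \<in> carrier_mat n r" and colsU: "cols U = xs"
    unfolding U_def using \<open>length xs = r\<close> xs SB colsB by auto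
  have inj: "z = 0\<^sub>v r" if "z \<in> carrier_vec r" "U *\<^sub>v z = 0\<^sub>v n" for z
    using lin_depI[OF U that(1) _ that(2)] li colsU xs by auto
  have "\<exists>w \<in> carrier_vec r. col B j = U *\<^sub>v w" if "j < m" for j
  proof -
    have "col B j \<in> set (cols B)"
      using that B by (simp add: cols_def)
    then have "col B j \<in> span (set xs)"
      using maximal_lin_indpt_spans[OF max colsB] xs(1) by simp
    then show ?thesis
      using span_mat_of_cols[of xs] xs SB colsB \<open>length xs = r\<close> unfolding U_def by auto
  qed
  then obtain V where V: "V \<in> carrier_mat r m" "B = U * V"
    using mat_factor_through_cols[OF B U] by blast
  have "\<exists>w \<in> carrier_vec m. col U t = B *\<^sub>v w" if "t < r" for t
  proof -
    have "col U t \<in> set (cols B)"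
      using that U colsU SB xs(1) by (metis carrier_matD(2) cols_length cols_nth nth_mem subsetD)
    then obtain j where "j < m" "col U t = col B j"
      using B by (auto simp: cols_def)
    then show ?thesis
      using mult_unit_vec_eq_col[OF B] by (intro bexI[of _ "unit_vec m j"]) auto
  qed
  then obtain W where W: "W \<in> carrier_mat m r" "U = B * W"
    using mat_factor_through_cols[OF U B] by blast
  show thesis
    using that U V W inj by blast
qed

lemma det_rank_factorization_core_neq_0:
  fixes B U V W Y :: "'a :: idom mat"
  assumes U: "U \<in> carrier_mat n r" and V: "V \<in> carrier_mat r n" and W: "W \<in> carrier_mat n r"
    and Y: "Y \<in> carrier_mat n n" and BUV: "B = U * V" and UBW: "U = B * W"
    and inj: "\<And>z. z \<in> carrier_vec r \<Longrightarrow> U *\<^sub>v z = 0\<^sub>v n \<Longrightarrow> z = 0\<^sub>v r"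
    and index_one: "B = Y * (B * B)"
  shows "det (V * U) \<noteq> 0"
proof
  have B: "B \<in> carrier_mat n n"
    using U V BUV by simp
  assume "det (V * U) = 0"
  then obtain z where z: "z \<in> carrier_vec r" "z \<noteq> 0\<^sub>v r" "V * U *\<^sub>v z = 0\<^sub>v r"
    using det_0_iff_vec_prod_zero[of "V * U" r] U V by auto
  have Uz: "U *\<^sub>v z = B *\<^sub>v (W *\<^sub>v z)"
    unfolding UBW by (rule assoc_mult_mat_vec[OF B W z(1)])
  have "B *\<^sub>v (U *\<^sub>v z) = U *\<^sub>v (V * U *\<^sub>v z)"
    unfolding BUV using U V z(1) by (simp add: assoc_mult_mat_vec)
  also have "\<dots> = 0\<^sub>v n"
    using U z(3) by simp
  finally have BUz: "B *\<^sub>v (U *\<^sub>v z) = 0\<^sub>v n" .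
  have Wz: "W *\<^sub>v z \<in> carrier_vec n"
    using W z(1) by simp
  have "U *\<^sub>v z = (Y * (B * B)) *\<^sub>v (W *\<^sub>v z)"
    unfolding Uz by (simp only: index_one[symmetric])
  also have "\<dots> = Y *\<^sub>v (B *\<^sub>v (U *\<^sub>v z))"
    unfolding Uz using assoc_mult_mat_vec[OF Y mult_carrier_mat[OF B B] Wz] assoc_mult_mat_vec[OF B B Wz]
    by simp
  also have "\<dots> = 0\<^sub>v n"
    using Y BUz by simp
  finally show False
    using inj z by blast
qed

lemma drazin_power_full_rank_factorization:
  fixes A X :: "'a :: field mat"
  assumes A: "A \<in> carrier_mat n n" and X: "X \<in> carrier_mat n n"
    and drazin: "A ^\<^sub>m (k + 1) * X = A ^\<^sub>m k" "X * A * X = X" "A * X = X * A"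
    and rank: "vec_space.rank n (A ^\<^sub>m (k + 1)) = r"
  obtains U V S where "U \<in> carrier_mat n r" "V \<in> carrier_mat r n" "S \<in> carrier_mat r n"
    and "A ^\<^sub>m (k + 1) = U * V" "det (V * U) \<noteq> 0" "X = U * S"
proof -
  obtain U V W where U: "U \<in> carrier_mat n r" and V: "V \<in> carrier_mat r n"
    and BUV: "A ^\<^sub>m (k + 1) = U * V" and W: "W \<in> carrier_mat n r" and UBW: "U = A ^\<^sub>m (k + 1) * W"
    and inj: "\<And>z. z \<in> carrier_vec r \<Longrightarrow> U *\<^sub>v z = 0\<^sub>v n \<Longrightarrow> z = 0\<^sub>v r"
    using full_rank_factorization[OF pow_carrier_mat[OF A] rank] by blast
  have "det (V * U) \<noteq> 0"
    using det_rank_factorization_core_neq_0[OF U V W pow_carrier_mat[OF X] BUV UBW inj]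
      drazin_power_eq_mult_square[OF A X drazin] by blast
  moreover have "X = U * (V * X ^\<^sub>m (k + 2))"
    using drazin_eq_power_mult[OF A X drazin] unfolding BUV assoc_mult_mat[OF U V pow_carrier_mat[OF X]] .
  moreover have "V * X ^\<^sub>m (k + 2) \<in> carrier_mat r n"
    by (rule mult_carrier_mat[OF V pow_carrier_mat[OF X]])
  ultimately show thesis
    using that U V BUV by blast
qed

theorem theorem3p5:
  fixes A X :: "complex mat" and y :: "complex vec" and n k r :: nat
  assumes "A \<in> carrier_mat n n"
    and "y \<in> carrier_vec n"
    and "mat_ind A = k"
    and "mrank (A ^\<^sub>m (k+1)) = r" and "mrank (A ^\<^sub>m k) = r"
    and "is_drazin_inverse n A X"
    and "i < n"
  shows "(X *\<^sub>v y) $ i =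
     (\<Sum>\<beta>\<in>{\<beta>\<in>Jrn r n. i \<in> \<beta>}.
         det (submatrix (replace_col (A ^\<^sub>m (k+1)) i (A ^\<^sub>m k *\<^sub>v y)) \<beta> \<beta>))
     / (\<Sum>\<beta>\<in>Jrn r n. det (submatrix (A ^\<^sub>m (k+1)) \<beta> \<beta>))"
proof -
  note A = assms(1) and y = assms(2) and i = assms(7)
  have X: "X \<in> carrier_mat n n" and drazin: "A ^\<^sub>m (k + 1) * X = A ^\<^sub>m k" "X * A * X = X" "A * X = X * A"
    using assms(3,6) unfolding is_drazin_inverse_def by auto
  have rank: "vec_space.rank n (A ^\<^sub>m (k + 1)) = r"
    using assms(4) A unfolding mrank_def pow_mat_dim(1) by simp
  then obtain U V S where U: "U \<in> carrier_mat n r" and V: "V \<in> carrier_mat r n" and S: "S \<in> carrier_mat r n"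
    and BUV: "A ^\<^sub>m (k + 1) = U * V" and detC: "det (V * U) \<noteq> 0" and XUS: "X = U * S"
    by (rule drazin_power_full_rank_factorization[OF A X drazin])
  have "r \<le> n"
    unfolding rank[symmetric] by (rule vec_space.rank_le_nc[OF pow_carrier_mat[OF A]])
  have s: "S *\<^sub>v y \<in> carrier_vec r"
    using S y by simp
  have "X *\<^sub>v y = U *\<^sub>v (S *\<^sub>v y)"
    unfolding XUS by (rule assoc_mult_mat_vec[OF U S y])
  moreover have "A ^\<^sub>m k *\<^sub>v y = U * V *\<^sub>v (X *\<^sub>v y)"
    unfolding BUV[symmetric] drazin(1)[symmetric] by (rule assoc_mult_mat_vec[OF pow_carrier_mat[OF A] X y])
  ultimately show ?thesis
    using sum_principal_minors_replace_col_range[OF U V \<open>r \<le> n\<close> detC s i]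
      principal_minor_sum_mult_comm[OF U V \<open>r \<le> n\<close>] detC
    unfolding principal_minor_sum_def BUV by simp
qed

end
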